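(* Consider a rate-$1/2$ binary convolutional code $\mathcal{C}$ whose two coded bits $[c_{1,t},c_{2,t}]$ at each time $t$ are mapped, without any interleaving, to one 4-PAM symbol (BICM-T), transmitted over a real AWGN channel with signal-to-noise ratio $\gamma=1/N_0$, and decoded by a soft-input Viterbi decoder treating the two L-values per time instant as independent. Model the per-time-instant decoding metrics by the Gaussian (zero-crossing) approximations $$\mathrm{p}_1(\lambda)=\tfrac12\big[\psi(\lambda;-3\alpha,2\alpha)+\psi(\lambda;-\alpha,2\alpha)\big],\quad \mathrm{p}_2(\lambda)=\psi(\lambda;-\alpha,2\alpha),\quad \mathrm{p}_\Sigma(\lambda)=\psi(\lambda;-4\alpha,8\alpha),$$ where $\alpha=4\gamma\Delta^2$, $\Delta=1/\sqrt5$, and $\psi(\lambda;\mu,\sigma^2)=\frac{1}{\sqrt{2\pi\sigma^2}}\exp\!\big(-\frac{(\lambda-\mu)^2}{2\sigma^2}\big)$. Define $$\mathrm{PEP}_{\mathrm T}(w_1,w_2,w_\Sigma)=\int_0^\infty \{\mathrm{p}_1\}^{*w_1}*\{\mathrm{p}_2\}^{*w_2}*\{\mathrm{p}_\Sigma\}^{*w_\Sigma}(\lambda)\,d\lambda$$ and $\mathrm{UB}_{\mathrm T}=\sum_{w_1,w_2,w_\Sigma}\beta^{\mathcal C}_{w_1,w_2,w_\Sigma}\,\mathrm{PEP}_{\mathrm T}(w_1,w_2,w_\Sigma)$. Then $$\mathrm{UB}_{\mathrm T}=\sum_{w_1,w_2,w_\Sigma}\beta^{\mathcal C}_{w_1,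w_2,w_\Sigma}\left(\tfrac12\right)^{w_1}\sum_{j=0}^{w_1}\binom{w_1}{j}\,Q\!\left(\sqrt{\frac{(w_1+w_2+4w_\Sigma+2j)^2}{w_1+w_2+4w_\Sigma}\cdot\frac{2\gamma}{5}}\right).$$
   Context: The 4-PAM constellation is $\{-3\Delta,-\Delta,\Delta,3\Delta\}$ with $\Delta=1/\sqrt5$ (unit average energy), labeled by the binary reflected Gray code $[1,1]\mapsto-3\Delta$, $[1,0]\mapsto-\Delta$, $[0,0]\mapsto\Delta$, $[0,1]\mapsto3\Delta$; the noise has variance $N_0/2$. An error event $\mathbf E=[\mathbf e_1^{T},\dots,\mathbf e_T^{T}]$ is a $2\times T$ binary matrix that is the codeword of a trellis path diverging from the zero state and remerging with it after $T$ stages; $\mathbf i_{\mathbf E}$ is the corresponding input sequence and $d_H(\mathbf i_{\mathbf E})$ its Hamming weight. For an error event, $w_{\mathbf E,1}$ (resp. $w_{\mathbf E,2}$) is the number of columns equal to $[1,0]^T$ (resp. $[0,1]^T$), and $w_{\mathbf E,\Sigma}$ is the number of columns equal to $[1,1]^T$. The spectrum $\beta^{\mathcal C}_{w_1,w_2,w_\Sigma}$ is the sum of $d_H(\mathbf i_{\mathbf E})$ over all error events with $(w_{\mathbf E,1},w_{\mathbf E,2},w_{\mathbf E,\Sigma})=(w_1,w_2,w_\Sigma)$. $\{p\}^{*w}$ denotes the $w$-fold self-convolution, $*$ convolution, and $Q(x)=\frac1{\sqrt{2\pi}}\int_x^\infty e^{-u^2/2}du$. *)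

theory Defs
  imports "HOL-Probability.Probability"
begin

definition psi :: "real \<Rightarrow> real \<Rightarrow> real \<Rightarrow> real" where
  "psi mu s2 x = exp (- ((x - mu)^2) / (2 * s2)) / sqrt (2 * pi * s2)"

definition Qfun :: "real \<Rightarrow> real" where
  "Qfun x = (LINT u:{x<..}|lborel. exp (- (u^2) / 2) / sqrt (2 * pi))"

definition Delta :: real where "Delta = 1 / sqrt 5"

definition alpha :: "real \<Rightarrow> real" where "alpha \<gamma> = 4 * \<gamma> * Delta^2"

definition p1 :: "real \<Rightarrow> real \<Rightarrow> real" where
  "p1 \<gamma> x = (1/2) * (psi (-3 * alpha \<gamma>) (2 * alpha \<gamma>) x + psi (- alpha \<gamma>) (2 * alpha \<gamma>) x)"

definition p2 :: "real \<Rightarrow> real \<Rightarrow> real" where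
  "p2 \<gamma> x = psi (- alpha \<gamma>) (2 * alpha \<gamma>) x"

definition pS :: "real \<Rightarrow> real \<Rightarrow> real" where
  "pS \<gamma> x = psi (-4 * alpha \<gamma>) (8 * alpha \<gamma>) x"

fun conv_pow :: "real measure \<Rightarrow> nat \<Rightarrow> real measure" where
  "conv_pow M 0 = return borel 0"
| "conv_pow M (Suc n) = convolution M (conv_pow M n)"

text \<open>PEP_T: integral over [0,inf) of the density
  {p1}^{*w1} * {p2}^{*w2} * {pS}^{*wS}, i.e. the mass that the corresponding
  convolution measure assigns to [0,inf).\<close>
definition PEP_T :: "real \<Rightarrow> nat \<Rightarrow> nat \<Rightarrow> nat \<Rightarrow> real" where
  "PEP_T \<gamma> w1 w2 wS =
     measure (convolution
       (convolution (conv_pow (density lborel (\<lambda>x. ennreal (p1 \<gamma> x))) w1)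
                    (conv_pow (density lborel (\<lambda>x. ennreal (p2 \<gamma> x))) w2))
       (conv_pow (density lborel (\<lambda>x. ennreal (pS \<gamma> x))) wS)) {0..}"

definition UB_T :: "real \<Rightarrow> (nat \<times> nat \<times> nat \<Rightarrow> real) \<Rightarrow> real" where
  "UB_T \<gamma> \<beta> = (\<Sum>\<^sub>\<infinity>(w1, w2, wS)\<in>UNIV. \<beta> (w1, w2, wS) * PEP_T \<gamma> w1 w2 wS)"

end

theory Submission
  imports Defs
begin

(* Each of p1, p2, pS is a Gaussian mixture with a common variance, and convolving
   Gaussians adds means and variances.  Hence the w1-fold power of
   p1 = (N(-a,2a) + N(-3a,2a))/2 is a binomial mixture, and with N = w1 + w2 + 4 wS the
   whole convolution is  sum_j 2^-w1 (w1 choose j) N(-(N+2j)a, 2Na).  The mass of each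
   component on [0,inf) is Q((N+2j)a / sqrt(2Na)), and a = 4 gamma/5 gives the stated
   argument.  The term w = (0,0,0), a point mass at 0 where the formula divides by zero,
   is removed by the hypothesis beta(0,0,0) = 0. *)

definition gauss :: "real \<Rightarrow> real \<Rightarrow> real \<Rightarrow> real" where
  "gauss m v = normal_density m (sqrt v)"

lemma gauss_nonneg [simp]: "0 \<le> gauss m v x"
  by (simp add: gauss_def)

lemma borel_measurable_gauss [measurable]: "gauss m v \<in> borel_measurable borel"
  by (simp add: gauss_def)

lemma gauss_shift: "gauss m v (x - b) = gauss (m + b) v x"
  by (simp add: gauss_def normal_density_def algebra_simps)

lemma psi_eq_gauss: "v > 0 \<Longrightarrow> psi m v = gauss m v"
  by (simp add: psi_def gauss_def normal_density_def fun_eq_iff)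

lemma nn_integral_gauss: "v > 0 \<Longrightarrow> (\<integral>\<^sup>+x. ennreal (gauss m v x) \<partial>lborel) = 1"
  using nn_integral_eq_integral[OF integrable_normal_density[where \<mu>=m and \<sigma>="sqrt v"]]
  by (simp add: gauss_def)

lemma finite_measure_density_gauss: "v > 0 \<Longrightarrow> finite_measure (density lborel (\<lambda>x. ennreal (gauss m v x)))"
  by (rule finite_measureI) (simp add: emeasure_density nn_integral_gauss)

lemma nn_integral_gauss_convolution:
  assumes "u > 0" "v > 0"
  shows "(\<integral>\<^sup>+y. ennreal (gauss a u (x - y)) * ennreal (gauss b v y) \<partial>lborel) = ennreal (gauss (a + b) (u + v) x)"
proof -
  have centre: "gauss m w z = normal_density 0 (sqrt w) (z - m)" for m w z
    by (simp add: gauss_def normal_density_def)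
  have "(\<integral>\<^sup>+y. ennreal (gauss a u (x - y)) * ennreal (gauss b v y) \<partial>lborel)
      = (\<integral>\<^sup>+y. ennreal (gauss a u (x - (b + 1 * y))) * ennreal (gauss b v (b + 1 * y)) \<partial>lborel)"
    by (subst nn_integral_real_affine[where c=1 and t=b]) auto
  also have "\<dots> = (\<integral>\<^sup>+y. ennreal (normal_density 0 (sqrt u) ((x - a - b) - y) * normal_density 0 (sqrt v) y) \<partial>lborel)"
    by (intro nn_integral_cong) (simp add: centre ennreal_mult'[symmetric] algebra_simps)
  also have "\<dots> = ennreal (normal_density 0 (sqrt ((sqrt u)\<^sup>2 + (sqrt v)\<^sup>2)) (x - a - b))"
    using conv_normal_density_zero_mean[of "sqrt u" "sqrt v"] assms by (metis real_sqrt_gt_zero)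
  also have "\<dots> = ennreal (gauss (a + b) (u + v) x)"
    using assms by (simp add: centre algebra_simps)
  finally show ?thesis .
qed

definition gauss_mix :: "'i set \<Rightarrow> ('i \<Rightarrow> real) \<Rightarrow> ('i \<Rightarrow> real) \<Rightarrow> real \<Rightarrow> real \<Rightarrow> real" where
  "gauss_mix I c m v x = (\<Sum>i\<in>I. c i * gauss (m i) v x)"

lemma borel_measurable_gauss_mix [measurable]: "gauss_mix I c m v \<in> borel_measurable borel"
  unfolding gauss_mix_def[abs_def] by measurable

lemma gauss_mix_cong:
  "(\<And>i. i \<in> I \<Longrightarrow> c i = c' i) \<Longrightarrow> (\<And>i. i \<in> I \<Longrightarrow> m i = m' i) \<Longrightarrow> v = v' \<Longrightarrow>
    gauss_mix I c m v x = gauss_mix I c' m' v' x"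
  unfolding gauss_mix_def by (intro sum.cong) auto

lemma gauss_mix_nonneg: "(\<And>i. i \<in> I \<Longrightarrow> c i \<ge> 0) \<Longrightarrow> gauss_mix I c m v x \<ge> 0"
  unfolding gauss_mix_def by (intro sum_nonneg mult_nonneg_nonneg) auto

lemma ennreal_gauss_mix:
  assumes "\<And>i. i \<in> I \<Longrightarrow> c i \<ge> 0"
  shows "ennreal (gauss_mix I c m v x) = (\<Sum>i\<in>I. ennreal (c i) * ennreal (gauss (m i) v x))"
  unfolding gauss_mix_def using assms by (subst sum_ennreal[symmetric]) (auto simp: ennreal_mult)

lemma finite_measure_density_gauss_mix:
  assumes "finite I" "\<And>i. i \<in> I \<Longrightarrow> c i \<ge> 0" "v > 0"
  shows "finite_measure (density lborel (\<lambda>x. ennreal (gauss_mix I c m v x)))"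
proof (rule finite_measureI)
  have "(\<integral>\<^sup>+x. ennreal (gauss_mix I c m v x) \<partial>lborel) = (\<Sum>i\<in>I. ennreal (c i))"
    using assms by (simp add: ennreal_gauss_mix nn_integral_sum nn_integral_cmult nn_integral_gauss)
  then show "emeasure (density lborel (\<lambda>x. ennreal (gauss_mix I c m v x)))
      (space (density lborel (\<lambda>x. ennreal (gauss_mix I c m v x)))) \<noteq> \<infinity>"
    using assms by (simp add: emeasure_density sum_ennreal)
qed

lemma nn_integral_gauss_convolution_gauss_mix:
  assumes "finite I" "\<And>i. i \<in> I \<Longrightarrow> c i \<ge> 0" "u > 0" "v > 0"
  shows "(\<integral>\<^sup>+y. ennreal (gauss a u (x - y)) * ennreal (gauss_mix I c m v y) \<partial>lborel)
       = ennreal (gauss_mix I c (\<lambda>i. a + m i) (u + v) x)"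
proof -
  have "(\<integral>\<^sup>+y. ennreal (gauss a u (x - y)) * ennreal (gauss_mix I c m v y) \<partial>lborel)
      = (\<integral>\<^sup>+y. (\<Sum>i\<in>I. ennreal (c i) * (ennreal (gauss a u (x - y)) * ennreal (gauss (m i) v y))) \<partial>lborel)"
    using assms(2) by (intro nn_integral_cong) (simp add: ennreal_gauss_mix sum_distrib_left ac_simps)
  also have "\<dots> = (\<Sum>i\<in>I. ennreal (c i) * ennreal (gauss (a + m i) (u + v) x))"
    using assms by (simp add: nn_integral_sum nn_integral_cmult nn_integral_gauss_convolution)
  also have "\<dots> = ennreal (gauss_mix I c (\<lambda>i. a + m i) (u + v) x)"
    using assms(2) by (simp add: ennreal_gauss_mix)
  finally show ?thesis .
qed

lemma nn_integral_gauss_pair_convolution_gauss_mix: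
  assumes "finite I" "\<And>i. i \<in> I \<Longrightarrow> c i \<ge> 0" "q \<ge> 0" "r \<ge> 0" "u > 0" "v > 0"
  shows "(\<integral>\<^sup>+y. ennreal (q * gauss a u (x - y) + r * gauss b u (x - y)) * ennreal (gauss_mix I c m v y) \<partial>lborel)
       = ennreal (q * gauss_mix I c (\<lambda>i. a + m i) (u + v) x + r * gauss_mix I c (\<lambda>i. b + m i) (u + v) x)"
proof -
  have "(\<integral>\<^sup>+y. ennreal (q * gauss a u (x - y) + r * gauss b u (x - y)) * ennreal (gauss_mix I c m v y) \<partial>lborel)
      = (\<integral>\<^sup>+y. ennreal q * (ennreal (gauss a u (x - y)) * ennreal (gauss_mix I c m v y))
          + ennreal r * (ennreal (gauss b u (x - y)) * ennreal (gauss_mix I c m v y)) \<partial>lborel)"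
    using assms by (intro nn_integral_cong) (simp add: ennreal_plus ennreal_mult distrib_right mult.assoc)
  also have "\<dots> = ennreal q * ennreal (gauss_mix I c (\<lambda>i. a + m i) (u + v) x)
      + ennreal r * ennreal (gauss_mix I c (\<lambda>i. b + m i) (u + v) x)"
    using assms by (simp add: nn_integral_add nn_integral_cmult nn_integral_gauss_convolution_gauss_mix)
  also have "\<dots> = ennreal (q * gauss_mix I c (\<lambda>i. a + m i) (u + v) x + r * gauss_mix I c (\<lambda>i. b + m i) (u + v) x)"
    using assms by (simp add: ennreal_plus ennreal_mult gauss_mix_nonneg)
  finally show ?thesis .
qed

lemma finite_measure_return_borel: "finite_measure (return borel (x :: real))"
  using prob_space_return[of x borel] by (simp add: prob_space_def)

lemma convolution_return_return: "return borel a \<star> return borel b = return borel (a + b :: real)"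
proof (rule measure_eqI)
  fix A assume "A \<in> sets (return borel a \<star> return borel b)"
  then have [measurable]: "A \<in> sets borel" by simp
  show "emeasure (return borel a \<star> return borel b) A = emeasure (return borel (a + b)) A"
    by (simp add: convolution_emeasure' finite_measure_return_borel nn_integral_return)
qed simp

lemma convolution_return_density:
  fixes f :: "real \<Rightarrow> ennreal"
  assumes [measurable]: "f \<in> borel_measurable borel" and "finite_measure (density lborel f)"
  shows "return borel b \<star> density lborel f = density lborel (\<lambda>x. f (x - b))"
proof (rule measure_eqI)
  fix A assume "A \<in> sets (return borel b \<star> density lborel f)"
  then have [measurable]: "A \<in> sets borel" by simp
  have "emeasure (return borel b \<star> density lborel f) A = (\<integral>\<^sup>+y. f y * indicator A (b + y) \<partial>lborel)"
    using assms by (simp add: convolution_emeasure' finite_measure_return_borel nn_integral_return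
        nn_integral_density)
  also have "\<dots> = (\<integral>\<^sup>+x. f (x - b) * indicator A x \<partial>lborel)"
    by (subst nn_integral_real_affine[where c=1 and t=b]) auto
  finally show "emeasure (return borel b \<star> density lborel f) A = emeasure (density lborel (\<lambda>x. f (x - b))) A"
    by (simp add: emeasure_density)
qed simp

lemma convolution_density_return:
  fixes f :: "real \<Rightarrow> ennreal"
  assumes "f \<in> borel_measurable borel" and "finite_measure (density lborel f)"
  shows "density lborel f \<star> return borel b = density lborel (\<lambda>x. f (x - b))"
  using assms convolution_commutative[of "density lborel f" "return borel b"]
  by (simp add: convolution_return_density finite_measure_return_borel)

(* Variance 0 gives the point mass, so that 0-fold convolution powers are Gaussian too. *)
definition gauss_measure :: "real \<Rightarrow> real \<Rightarrow> real measure" where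
  "gauss_measure m v = (if v = 0 then return borel m else density lborel (\<lambda>x. ennreal (gauss m v x)))"

lemma sets_gauss_measure [simp]: "sets (gauss_measure m v) = sets borel"
  by (simp add: gauss_measure_def)

lemma finite_measure_gauss_measure: "v \<ge> 0 \<Longrightarrow> finite_measure (gauss_measure m v)"
  by (simp add: gauss_measure_def finite_measure_return_borel finite_measure_density_gauss)

lemma gauss_measure_convolution:
  assumes "u \<ge> 0" "v \<ge> 0"
  shows "gauss_measure a u \<star> gauss_measure b v = gauss_measure (a + b) (u + v)"
proof -
  have shift: "return borel a \<star> density lborel (\<lambda>x. ennreal (gauss b w x))
      = density lborel (\<lambda>x. ennreal (gauss (a + b) w x))" if "w > 0" for a b w
    using that by (simp add: convolution_return_density finite_measure_density_gauss gauss_shift add.commute)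
  consider "u = 0" "v = 0" | "u = 0" "v > 0" | "u > 0" "v = 0" | "u > 0" "v > 0"
    using assms by fastforce
  then show ?thesis
  proof cases
    case 1 then show ?thesis by (simp add: gauss_measure_def convolution_return_return)
  next
    case 2 then show ?thesis by (simp add: gauss_measure_def shift)
  next
    case 3 then show ?thesis
      using convolution_commutative[of "gauss_measure a u" "gauss_measure b v"]
      by (simp add: gauss_measure_def finite_measure_return_borel finite_measure_density_gauss shift add.commute)
  next
    case 4 then show ?thesis
      by (simp add: gauss_measure_def convolution_density finite_measure_density_gauss
          nn_integral_gauss_convolution)
  qed
qed

lemma conv_pow_gauss_measure:
  assumes "v \<ge> 0"
  shows "conv_pow (gauss_measure b v) n = gauss_measure (real n * b) (real n * v)"
proof (induction n)
  case 0 show ?case by (simp add: gauss_measure_def)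
next
  case (Suc n) then show ?case
    using assms by (simp add: gauss_measure_convolution algebra_simps)
qed

lemma gauss_mix_convolution_gauss_measure:
  assumes "finite I" "\<And>i. i \<in> I \<Longrightarrow> c i \<ge> 0" "u > 0" "v \<ge> 0"
  shows "density lborel (\<lambda>x. ennreal (gauss_mix I c m u x)) \<star> gauss_measure b v
       = density lborel (\<lambda>x. ennreal (gauss_mix I c (\<lambda>i. m i + b) (u + v) x))"
proof (cases "v = 0")
  case True
  have "gauss_mix I c m u (x - b) = gauss_mix I c (\<lambda>i. m i + b) u x" for x
    by (simp add: gauss_mix_def gauss_shift)
  then show ?thesis
    using True assms by (simp add: gauss_measure_def convolution_density_return finite_measure_density_gauss_mix)
next
  case False
  then have "v > 0" using assms by simp
  have "density lborel (\<lambda>x. ennreal (gauss_mix I c m u x)) \<star> gauss_measure b v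
      = (density lborel (\<lambda>x. ennreal (gauss b v x)) \<star> density lborel (\<lambda>x. ennreal (gauss_mix I c m u x)))"
    using \<open>v > 0\<close> assms
    by (simp add: gauss_measure_def convolution_commutative finite_measure_density_gauss finite_measure_density_gauss_mix)
  also have "\<dots> = density lborel (\<lambda>x. ennreal (gauss_mix I c (\<lambda>i. b + m i) (v + u) x))"
    using \<open>v > 0\<close> assms
    by (simp add: convolution_density finite_measure_density_gauss finite_measure_density_gauss_mix
        nn_integral_gauss_convolution_gauss_mix)
  finally show ?thesis by (simp add: add.commute)
qed

lemma sum_Suc_choose:
  fixes f :: "nat \<Rightarrow> real"
  shows "(\<Sum>k\<le>Suc n. real (Suc n choose k) * f k)
       = (\<Sum>j\<le>n. real (n choose j) * f j) + (\<Sum>j\<le>n. real (n choose j) * f (Suc j))"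
proof -
  have "(\<Sum>j\<le>n. real (n choose j) * f j) = (\<Sum>j\<le>Suc n. real (n choose j) * f j)"
    by simp
  also have "\<dots> = f 0 + (\<Sum>j\<le>n. real (n choose Suc j) * f (Suc j))"
    by (subst sum.atMost_Suc_shift) simp
  finally show ?thesis
    by (subst sum.atMost_Suc_shift) (simp add: sum.distrib algebra_simps)
qed

lemma gauss_mix_binomial_Suc:
  fixes q r a d w x :: real
  shows "q * gauss_mix {..n} (\<lambda>j. real (n choose j) * q ^ (n - j) * r ^ j)
              (\<lambda>j. a + (real n * a + real j * d)) w x
       + r * gauss_mix {..n} (\<lambda>j. real (n choose j) * q ^ (n - j) * r ^ j)
              (\<lambda>j. a + d + (real n * a + real j * d)) w x
       = gauss_mix {..Suc n} (\<lambda>j. real (Suc n choose j) * q ^ (Suc n - j) * r ^ j)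
              (\<lambda>j. real (Suc n) * a + real j * d) w x"
proof -
  define F where "F j = q ^ (Suc n - j) * r ^ j * gauss (real (Suc n) * a + real j * d) w x" for j
  have "q * gauss_mix {..n} (\<lambda>j. real (n choose j) * q ^ (n - j) * r ^ j)
          (\<lambda>j. a + (real n * a + real j * d)) w x = (\<Sum>j\<le>n. real (n choose j) * F j)"
    unfolding gauss_mix_def F_def sum_distrib_left
    by (intro sum.cong refl) (simp add: Suc_diff_le algebra_simps)
  moreover have "r * gauss_mix {..n} (\<lambda>j. real (n choose j) * q ^ (n - j) * r ^ j)
          (\<lambda>j. a + d + (real n * a + real j * d)) w x = (\<Sum>j\<le>n. real (n choose j) * F (Suc j))"
    unfolding gauss_mix_def F_def sum_distrib_left
    by (intro sum.cong refl) (simp add: algebra_simps)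
  moreover have "gauss_mix {..Suc n} (\<lambda>j. real (Suc n choose j) * q ^ (Suc n - j) * r ^ j)
          (\<lambda>j. real (Suc n) * a + real j * d) w x = (\<Sum>j\<le>Suc n. real (Suc n choose j) * F j)"
    unfolding gauss_mix_def F_def by (simp add: mult.assoc)
  ultimately show ?thesis
    by (simp only: sum_Suc_choose)
qed

lemma conv_pow_gauss_mix_binomial:
  assumes "n > 0" "v > 0" "q \<ge> 0" "r \<ge> 0"
  shows "conv_pow (density lborel (\<lambda>x. ennreal (q * gauss a v x + r * gauss (a + d) v x))) n
       = density lborel (\<lambda>x. ennreal (gauss_mix {..n} (\<lambda>j. real (n choose j) * q ^ (n - j) * r ^ j)
           (\<lambda>j. real n * a + real j * d) (real n * v) x))"
  using assms(1)
proof (induction n rule: nat_induct_non_zero)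
  have two_mix: "q * gauss a v x + r * gauss (a + d) v x
      = gauss_mix {..1} (\<lambda>j. real (1 choose j) * q ^ (1 - j) * r ^ j) (\<lambda>j. real 1 * a + real j * d) (real 1 * v) x"
    for x by (simp add: gauss_mix_def atMost_Suc)
  have fin: "finite_measure (density lborel (\<lambda>x. ennreal (q * gauss a v x + r * gauss (a + d) v x)))"
    unfolding two_mix using assms by (intro finite_measure_density_gauss_mix) auto
  {
    case 1
    show ?case
      using fin by (simp add: convolution_density_return) (simp add: two_mix)
  next
    case (Suc n)
    let ?c = "\<lambda>j. real (n choose j) * q ^ (n - j) * r ^ j" and ?m = "\<lambda>j. real n * a + real j * d"
    have var: "v + real n * v = real (Suc n) * v"
      by (simp add: algebra_simps)
    have "(\<integral>\<^sup>+y. ennreal (q * gauss a v (x - y) + r * gauss (a + d) v (x - y)) *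
        ennreal (gauss_mix {..n} ?c ?m (real n * v) y) \<partial>lborel)
      = ennreal (gauss_mix {..Suc n} (\<lambda>j. real (Suc n choose j) * q ^ (Suc n - j) * r ^ j)
           (\<lambda>j. real (Suc n) * a + real j * d) (real (Suc n) * v) x)" for x
    proof -
      have "(\<integral>\<^sup>+y. ennreal (q * gauss a v (x - y) + r * gauss (a + d) v (x - y)) *
          ennreal (gauss_mix {..n} ?c ?m (real n * v) y) \<partial>lborel)
        = ennreal (q * gauss_mix {..n} ?c (\<lambda>j. a + ?m j) (v + real n * v) x
            + r * gauss_mix {..n} ?c (\<lambda>j. a + d + ?m j) (v + real n * v) x)"
        using Suc.hyps assms by (intro nn_integral_gauss_pair_convolution_gauss_mix) auto
      then show ?thesis
        unfolding var gauss_mix_binomial_Suc .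
    qed
    then show ?case
      using Suc fin assms
      by (simp del: of_nat_Suc add: convolution_density finite_measure_density_gauss_mix)
  }
qed

lemma ennreal_Qfun: "ennreal (Qfun x) = (\<integral>\<^sup>+u. ennreal (gauss 0 1 u) * indicator {x..} u \<partial>lborel)"
proof -
  have std: "exp (- (u\<^sup>2) / 2) / sqrt (2 * pi) = gauss 0 1 u" for u
    by (simp add: gauss_def normal_density_def)
  have "integrable lborel (\<lambda>u. indicator {x<..} u *\<^sub>R gauss 0 1 u)"
    by (intro integrable_mult_indicator) (auto simp: gauss_def integrable_normal_density)
  then have "ennreal (Qfun x) = (\<integral>\<^sup>+u. ennreal (indicator {x<..} u *\<^sub>R gauss 0 1 u) \<partial>lborel)"
    unfolding Qfun_def set_lebesgue_integral_def std by (subst nn_integral_eq_integral) auto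
  also have "\<dots> = (\<integral>\<^sup>+u. ennreal (gauss 0 1 u) * indicator {x..} u \<partial>lborel)"
    by (intro nn_integral_cong_AE eventually_mono[OF AE_lborel_singleton[of x]])
      (auto simp: indicator_def)
  finally show ?thesis .
qed

lemma Qfun_nonneg: "Qfun x \<ge> 0"
  unfolding Qfun_def set_lebesgue_integral_def by (intro integral_nonneg_AE) auto

lemma nn_integral_gauss_atLeast_0:
  assumes "v > 0"
  shows "(\<integral>\<^sup>+x. ennreal (gauss m v x) * indicator {0..} x \<partial>lborel) = ennreal (Qfun (- m / sqrt v))"
proof -
  define s where "s = sqrt v"
  have s: "s > 0" using assms by (simp add: s_def)
  have "(\<integral>\<^sup>+x. ennreal (gauss m v x) * indicator {0..} x \<partial>lborel)
      = ennreal s * (\<integral>\<^sup>+u. ennreal (gauss m v (m + s * u)) * indicator {0..} (m + s * u) \<partial>lborel)"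
    using s by (subst nn_integral_real_affine[where c=s and t=m]) auto
  also have "\<dots> = (\<integral>\<^sup>+u. ennreal s * (ennreal (gauss m v (m + s * u)) * indicator {0..} (m + s * u)) \<partial>lborel)"
    by (subst nn_integral_cmult) auto
  also have "\<dots> = (\<integral>\<^sup>+u. ennreal (gauss 0 1 u) * indicator {- m / s..} u \<partial>lborel)"
  proof (intro nn_integral_cong)
    fix u
    have "sqrt (pi * (2 * s\<^sup>2)) = s * sqrt (pi * 2)"
      using s by (simp add: real_sqrt_mult ac_simps)
    then have "s * gauss m v (m + s * u) = gauss 0 1 u"
      using s by (simp add: gauss_def normal_density_def s_def[symmetric] power_mult_distrib field_simps)
    moreover have "0 \<le> m + s * u \<longleftrightarrow> - m / s \<le> u"
      using s by (auto simp: field_simps)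
    ultimately show "ennreal s * (ennreal (gauss m v (m + s * u)) * indicator {0..} (m + s * u))
        = ennreal (gauss 0 1 u) * indicator {- m / s..} u"
      using s by (auto simp: indicator_def ennreal_mult[symmetric])
  qed
  also have "\<dots> = ennreal (Qfun (- m / sqrt v))"
    by (simp add: ennreal_Qfun s_def)
  finally show ?thesis .
qed

lemma measure_gauss_mix_atLeast_0:
  assumes "finite I" "\<And>i. i \<in> I \<Longrightarrow> c i \<ge> 0" "v > 0"
  shows "measure (density lborel (\<lambda>x. ennreal (gauss_mix I c m v x))) {0..}
       = (\<Sum>i\<in>I. c i * Qfun (- m i / sqrt v))"
proof -
  have "emeasure (density lborel (\<lambda>x. ennreal (gauss_mix I c m v x))) {0..}
      = (\<integral>\<^sup>+x. (\<Sum>i\<in>I. ennreal (c i) * (ennreal (gauss (m i) v x) * indicator {0..} x)) \<partial>lborel)"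
    using assms by (simp add: emeasure_density ennreal_gauss_mix sum_distrib_right mult.assoc)
  also have "\<dots> = (\<Sum>i\<in>I. ennreal (c i) * ennreal (Qfun (- m i / sqrt v)))"
    using assms by (simp add: nn_integral_sum nn_integral_cmult nn_integral_gauss_atLeast_0)
  also have "\<dots> = ennreal (\<Sum>i\<in>I. c i * Qfun (- m i / sqrt v))"
    using assms by (subst sum_ennreal[symmetric]) (auto simp: ennreal_mult Qfun_nonneg)
  finally show ?thesis
    using assms by (simp add: measure_def sum_nonneg Qfun_nonneg)
qed

lemma alpha_eq: "alpha \<gamma> = 4 * \<gamma> / 5"
  by (simp add: alpha_def Delta_def power_divide)

lemma PEP_T_eq_measure_gauss_mix:
  assumes "\<gamma> > 0" and N: "w1 + w2 + 4 * wS > 0"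
  shows "PEP_T \<gamma> w1 w2 wS = measure (density lborel (\<lambda>x. ennreal (gauss_mix {..w1}
      (\<lambda>j. (1/2) ^ w1 * real (w1 choose j)) (\<lambda>j. - (real (w1 + w2 + 4 * wS) + 2 * real j) * alpha \<gamma>)
      (2 * alpha \<gamma> * real (w1 + w2 + 4 * wS)) x))) {0..}"
proof -
  define \<alpha> where "\<alpha> = alpha \<gamma>"
  have \<alpha>: "\<alpha> > 0" using assms by (simp add: \<alpha>_def alpha_eq)
  have p1: "p1 \<gamma> x = 1/2 * gauss (- \<alpha>) (2 * \<alpha>) x + 1/2 * gauss (- \<alpha> + - 2 * \<alpha>) (2 * \<alpha>) x" for x
    using \<alpha> by (simp add: p1_def psi_eq_gauss \<alpha>_def algebra_simps)
  have p2: "density lborel (\<lambda>x. ennreal (p2 \<gamma> x)) = gauss_measure (- \<alpha>) (2 * \<alpha>)"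
    using \<alpha> by (simp add: p2_def psi_eq_gauss gauss_measure_def \<alpha>_def)
  have pS: "density lborel (\<lambda>x. ennreal (pS \<gamma> x)) = gauss_measure (-4 * \<alpha>) (8 * \<alpha>)"
    using \<alpha> by (simp add: pS_def psi_eq_gauss gauss_measure_def \<alpha>_def)
  have "convolution (convolution (conv_pow (density lborel (\<lambda>x. ennreal (p1 \<gamma> x))) w1)
      (conv_pow (density lborel (\<lambda>x. ennreal (p2 \<gamma> x))) w2))
      (conv_pow (density lborel (\<lambda>x. ennreal (pS \<gamma> x))) wS)
    = density lborel (\<lambda>x. ennreal (gauss_mix {..w1} (\<lambda>j. (1/2) ^ w1 * real (w1 choose j))
        (\<lambda>j. - (real (w1 + w2 + 4 * wS) + 2 * real j) * \<alpha>) (2 * \<alpha> * real (w1 + w2 + 4 * wS)) x))"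
  proof (cases "w1 = 0")
    case True
    have "real (w1 + w2 + 4 * wS) > 0" using N by (simp only: of_nat_0_less_iff)
    then have "2 * \<alpha> * real (w1 + w2 + 4 * wS) > 0" using \<alpha> by simp
    moreover have "conv_pow (density lborel (\<lambda>x. ennreal (p1 \<gamma> x))) w1 = gauss_measure 0 0"
      using True by (simp add: gauss_measure_def)
    ultimately show ?thesis
      using True \<alpha> unfolding p2 pS
      by (simp add: conv_pow_gauss_measure gauss_measure_convolution)
        (simp add: gauss_measure_def gauss_mix_def algebra_simps)
  next
    case False
    have "conv_pow (density lborel (\<lambda>x. ennreal (p1 \<gamma> x))) w1
      = density lborel (\<lambda>x. ennreal (gauss_mix {..w1} (\<lambda>j. real (w1 choose j) * (1/2) ^ (w1 - j) * (1/2) ^ j)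
          (\<lambda>j. real w1 * (- \<alpha>) + real j * (- 2 * \<alpha>)) (real w1 * (2 * \<alpha>)) x))"
      unfolding p1 using False \<alpha> by (intro conv_pow_gauss_mix_binomial) auto
    then show ?thesis
      using \<alpha> False unfolding p2 pS
      by (simp add: conv_pow_gauss_measure gauss_mix_convolution_gauss_measure add_pos_nonneg)
        (intro arg_cong[where f="density lborel"] ext arg_cong[where f=ennreal] gauss_mix_cong;
          simp add: power_add[symmetric] algebra_simps)
  qed
  then show ?thesis
    unfolding PEP_T_def \<alpha>_def by simp
qed

lemma PEP_T_closed_form:
  assumes "\<gamma> > 0" and N: "w1 + w2 + 4 * wS > 0"
  shows "PEP_T \<gamma> w1 w2 wS = (1/2) ^ w1 * (\<Sum>j\<le>w1. real (w1 choose j) *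
           Qfun (sqrt ((real (w1 + w2 + 4 * wS + 2 * j))\<^sup>2 / real (w1 + w2 + 4 * wS) * (2 * \<gamma> / 5))))"
proof -
  let ?N = "real (w1 + w2 + 4 * wS)"
  have "?N > 0" using N by (simp only: of_nat_0_less_iff)
  have "alpha \<gamma> > 0" using assms by (simp add: alpha_eq)
  have Q_argument: "- (- (?N + 2 * real j) * alpha \<gamma>) / sqrt (2 * alpha \<gamma> * ?N)
      = sqrt ((real (w1 + w2 + 4 * wS + 2 * j))\<^sup>2 / ?N * (2 * \<gamma> / 5))" for j
  proof -
    have "- (- (?N + 2 * real j) * alpha \<gamma>) / sqrt (2 * alpha \<gamma> * ?N)
        = sqrt (((?N + 2 * real j) * alpha \<gamma>)\<^sup>2 / (2 * alpha \<gamma> * ?N))"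
      using \<open>alpha \<gamma> > 0\<close> by (simp add: real_sqrt_divide algebra_simps)
    also have "((?N + 2 * real j) * alpha \<gamma>)\<^sup>2 / (2 * alpha \<gamma> * ?N)
        = (?N + 2 * real j)\<^sup>2 / ?N * (alpha \<gamma> / 2)"
      using \<open>alpha \<gamma> > 0\<close> by (simp add: power_mult_distrib power2_eq_square ac_simps)
    also have "\<dots> = (real (w1 + w2 + 4 * wS + 2 * j))\<^sup>2 / ?N * (2 * \<gamma> / 5)"
      by (simp add: alpha_eq)
    finally show ?thesis .
  qed
  have "PEP_T \<gamma> w1 w2 wS = (\<Sum>j\<le>w1. (1/2) ^ w1 * real (w1 choose j) *
      Qfun (- (- (?N + 2 * real j) * alpha \<gamma>) / sqrt (2 * alpha \<gamma> * ?N)))"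
    unfolding PEP_T_eq_measure_gauss_mix[OF assms]
    using \<open>?N > 0\<close> \<open>alpha \<gamma> > 0\<close> by (intro measure_gauss_mix_atLeast_0) auto
  then show ?thesis
    unfolding Q_argument by (simp only: sum_distrib_left mult.assoc)
qed

theorem theorem1:
  fixes \<gamma> :: real and \<beta> :: "nat \<times> nat \<times> nat \<Rightarrow> real"
  assumes "\<gamma> > 0"
    and "\<beta> (0, 0, 0) = 0"
  shows "UB_T \<gamma> \<beta> =
    (\<Sum>\<^sub>\<infinity>(w1, w2, wS)\<in>UNIV. \<beta> (w1, w2, wS) * (1/2) ^ w1 *
       (\<Sum>j\<le>w1. real (w1 choose j) *
          Qfun (sqrt ((real (w1 + w2 + 4 * wS + 2 * j))^2 / real (w1 + w2 + 4 * wS)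
                      * (2 * \<gamma> / 5)))))"
proof -
  have summand: "\<beta> (w1, w2, wS) * PEP_T \<gamma> w1 w2 wS = \<beta> (w1, w2, wS) * (1/2) ^ w1 *
       (\<Sum>j\<le>w1. real (w1 choose j) *
          Qfun (sqrt ((real (w1 + w2 + 4 * wS + 2 * j))^2 / real (w1 + w2 + 4 * wS) * (2 * \<gamma> / 5))))"
    for w1 w2 wS
  proof (cases "w1 + w2 + 4 * wS > 0")
    case True
    then show ?thesis using assms(1) by (simp add: PEP_T_closed_form mult.assoc)
  next
    case False
    then show ?thesis using assms(2) by simp
  qed
  show ?thesis
    unfolding UB_T_def by (simp only: summand)
qed

end
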